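(* There exists a constant $c>0$ such that for all sufficiently large $n\in\mathbb{N}$ there exists an $n$-vertex $3$-uniform generalised hedgehog $H^*$ with \[R(H^* )\ \ge\ c\,\frac{n^{3/2}}{\log n}.\] In particular, $H^*$ is a $1$-degenerate $3$-uniform hypergraph on $n$ vertices whose $2$-colour Ramsey number is not $O(n)$.
   Context: A $3$-graph is a $3$-uniform hypergraph. For $3$-graphs $G,H$, the ($2$-colour) Ramsey number $R(G,H)$ is the least $N$ such that every colouring of the edges of the complete $3$-graph on $N$ vertices with red and blue contains a blue copy of $G$ or a red copy of $H$; $R(G)=R(G,G)$. The degree of a vertex is the number of edges containing it; a hypergraph is $D$-degenerate if every subhypergraph has a vertex of degree at most $D$ in that subhypergraph. A (generalised) hedgehog is a $3$-graph on vertex set $B\sqcup S$ ($B$ the body, $S$ the spikes) in which every edge consists of one spike and two body vertices, and every spike lies in exactly one edge (different spikes may be attached to the same pair of body vertices, and some pairs of body vertices may have no spike). Every generalised hedgehog is $1$-degenerate. *)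

theory Defs
  imports Complex_Main
begin

definition three_graph :: "'a set \<Rightarrow> 'a set set \<Rightarrow> bool" where
  "three_graph V E \<longleftrightarrow> finite V \<and> (\<forall>e\<in>E. e \<subseteq> V \<and> card e = 3)"

definition gen_hedgehog :: "'a set \<Rightarrow> 'a set set \<Rightarrow> bool" where
  "gen_hedgehog V E \<longleftrightarrow> three_graph V E \<and>
     (\<exists>B S. B \<inter> S = {} \<and> V = B \<union> S \<and>
        (\<forall>e\<in>E. card (e \<inter> S) = 1 \<and> card (e \<inter> B) = 2) \<and>
        (\<forall>s\<in>S. \<exists>!e. e \<in> E \<and> s \<in> e))"

text \<open>A colouring of the edges of the complete 3-graph on {0..<N}: col e = True
  means e is blue, False means red (only values on 3-subsets of {0..<N} matter).\<close>
definition has_copy :: "nat \<Rightarrow> (nat set \<Rightarrow> bool) \<Rightarrow> bool \<Rightarrow> 'a set \<Rightarrow> 'a set set \<Rightarrow> bool" where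
  "has_copy N col b V E \<longleftrightarrow>
     (\<exists>f. inj_on f V \<and> f ` V \<subseteq> {..<N} \<and> (\<forall>e\<in>E. col (f ` e) = b))"

definition arrows :: "nat \<Rightarrow> 'a set \<Rightarrow> 'a set set \<Rightarrow> 'b set \<Rightarrow> 'b set set \<Rightarrow> bool" where
  "arrows N VG EG VH EH \<longleftrightarrow>
     (\<forall>col. has_copy N col True VG EG \<or> has_copy N col False VH EH)"

definition ramsey2 :: "'a set \<Rightarrow> 'a set set \<Rightarrow> 'b set \<Rightarrow> 'b set set \<Rightarrow> nat" where
  "ramsey2 VG EG VH EH = (LEAST N. arrows N VG EG VH EH)"

definition ramsey :: "'a set \<Rightarrow> 'a set set \<Rightarrow> nat" where
  "ramsey V E = ramsey2 V E V E"

end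

theory Submission
  imports Defs "HOL-Library.Ramsey" "HOL-Library.FuncSet" "HOL-Library.Nat_Bijection"
    "HOL-Real_Asymp.Real_Asymp"
begin

(*
  Let G be a graph on N vertices with no independent k-set, no 9-clique and maximum degree
  below t, and colour a triple blue iff it spans no edge of G.  The hedgehog H* has one spike on
  every pair of k body vertices and 2t further spikes on every pair of nine of them.  A blue copy
  of H* would place its k body vertices on an independent set of G.  In a red copy the nine
  special body vertices span a non-edge ab, so each of the 2t spikes on ab is adjacent in G to
  a or b, contradicting the degree bound.  By the union bound the random graph with edge
  probability 1/q has these properties for k ~ sqrt n / 2, q ~ sqrt n / (20 log n), t ~ n / 400
  and N ~ n^(3/2) / log n, while H* needs only k + k^2 + 162 t <= n vertices; further isolated
  body vertices pad it to exactly n.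
*)

section \<open>Sparse Ramsey graphs by the union bound\<close>

lemma card_PiE_constrained:
  assumes "finite P" "Q \<subseteq> P" "R \<subseteq> D"
  shows "card {c \<in> PiE P (\<lambda>_. D). \<forall>e\<in>Q. c e \<in> R} = card R ^ card Q * card D ^ (card P - card Q)"
proof -
  have "{c \<in> PiE P (\<lambda>_. D). \<forall>e\<in>Q. c e \<in> R} = PiE P (\<lambda>e. if e \<in> Q then R else D)"
    using assms by (auto simp: PiE_def Pi_def split: if_split_asm)
  also have "card \<dots> = (\<Prod>e\<in>P. if e \<in> Q then card R else card D)"
    using assms(1) by (simp add: card_PiE if_distrib cong: prod.cong)
  also have "\<dots> = card R ^ card Q * card D ^ card (P - Q)"
    using assms(1,2) by (simp add: prod.If_cases Int_absorb1 Diff_eq)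
  finally show ?thesis
    using assms(1,2) by (simp add: card_Diff_subset finite_subset)
qed

lemma ex_PiE_avoiding_constraints:
  fixes C :: "('a set \<times> 'b set) set"
  assumes "finite P" "finite D" "D \<noteq> {}" "finite C"
    and constraints: "\<And>Q R. (Q, R) \<in> C \<Longrightarrow> Q \<subseteq> P \<and> R \<subseteq> D"
    and small: "(\<Sum>(Q, R)\<in>C. (real (card R) / real (card D)) ^ card Q) < 1"
  shows "\<exists>c\<in>PiE P (\<lambda>_. D). \<forall>(Q, R)\<in>C. \<exists>e\<in>Q. c e \<notin> R"
proof -
  define \<Omega> where "\<Omega> = PiE P (\<lambda>_. D)"
  define bad where "bad = (\<lambda>(Q, R). {c \<in> \<Omega>. \<forall>e\<in>Q. c e \<in> R})"
  have D: "real (card D) > 0"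
    using assms(2,3) by (simp add: card_gt_0_iff)
  have card_bad: "real (card (bad QR)) = real (card \<Omega>) * (case QR of (Q, R) \<Rightarrow> (real (card R) / real (card D)) ^ card Q)"
    if "QR \<in> C" for QR
  proof -
    obtain Q R where QR: "QR = (Q, R)"
      by fastforce
    have "Q \<subseteq> P" "R \<subseteq> D" "card Q \<le> card P"
      using constraints that assms(1) unfolding QR by (auto intro: card_mono)
    moreover have "real (card D) ^ card P = real (card D) ^ (card P - card Q) * real (card D) ^ card Q"
      using \<open>card Q \<le> card P\<close> by (simp flip: power_add)
    ultimately show ?thesis
      using D assms(1) unfolding bad_def \<Omega>_def QR
      by (simp add: card_PiE_constrained card_PiE power_divide)
  qed
  have "real (card (\<Union>(bad ` C))) \<le> (\<Sum>QR\<in>C. real (card (bad QR)))"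
    using card_UN_le[OF assms(4), of bad] by (simp flip: of_nat_sum)
  also have "\<dots> = real (card \<Omega>) * (\<Sum>(Q, R)\<in>C. (real (card R) / real (card D)) ^ card Q)"
    unfolding sum_distrib_left using card_bad by (rule sum.cong[OF refl])
  also have "\<dots> < real (card \<Omega>)"
    using small D assms(1-3) unfolding \<Omega>_def
    by (simp add: card_PiE card_gt_0_iff)
  finally have "card (\<Union>(bad ` C)) < card \<Omega>"
    by simp
  moreover have "\<Union>(bad ` C) \<subseteq> \<Omega>"
    unfolding bad_def by auto
  ultimately have "\<Union>(bad ` C) \<noteq> \<Omega>"
    by auto
  with \<open>\<Union>(bad ` C) \<subseteq> \<Omega>\<close> obtain c where "c \<in> \<Omega>" "c \<notin> \<Union>(bad ` C)"
    by blast
  then show ?thesis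
    unfolding \<Omega>_def bad_def by (auto split: prod.splits)
qed

lemma sum_image_le_card_mult:
  fixes g :: "'b \<Rightarrow> real"
  assumes "finite I" "\<And>i. i \<in> I \<Longrightarrow> g (f i) = w" "0 \<le> w"
  shows "sum g (f ` I) \<le> real (card I) * w"
proof -
  have "sum g (f ` I) \<le> sum (g \<circ> f) I"
    using assms by (intro sum_image_le) auto
  also have "\<dots> = real (card I) * w"
    using assms(2) by simp
  finally show ?thesis .
qed

definition sparse_ramsey_graph :: "nat \<Rightarrow> nat \<Rightarrow> nat \<Rightarrow> nat \<Rightarrow> nat set set \<Rightarrow> bool" where
  "sparse_ramsey_graph N k s t G \<longleftrightarrow>
     G \<subseteq> [{..<N}]\<^bsup>2\<^esup> \<and>
     (\<forall>A\<in>[{..<N}]\<^bsup>k\<^esup>. [A]\<^bsup>2\<^esup> \<inter> G \<noteq> {}) \<and>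
     (\<forall>A\<in>[{..<N}]\<^bsup>s\<^esup>. \<not> [A]\<^bsup>2\<^esup> \<subseteq> G) \<and>
     (\<forall>v<N. card {w. {v, w} \<in> G} < t)"

(*
  For a colouring c of the pairs with q colours, {e. c e = 0} is the random graph with edge
  probability 1/q.  A constraint (Q, R) is violated if c maps all of Q into R; the three families
  are the events that this graph has an independent k-set, an s-clique, or a vertex with t
  neighbours.
*)
definition ramsey_constraints :: "nat \<Rightarrow> nat \<Rightarrow> nat \<Rightarrow> nat \<Rightarrow> nat \<Rightarrow> (nat set set \<times> nat set) set" where
  "ramsey_constraints N k s t q =
     (\<lambda>A. ([A]\<^bsup>2\<^esup>, {1..<q})) ` [{..<N}]\<^bsup>k\<^esup> \<union>
     (\<lambda>A. ([A]\<^bsup>2\<^esup>, {0})) ` [{..<N}]\<^bsup>s\<^esup> \<union>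
     (\<lambda>(v, T). ((\<lambda>w. {v, w}) ` T, {0})) ` (SIGMA v:{..<N}. [{..<N} - {v}]\<^bsup>t\<^esup>)"

lemma finite_ramsey_constraints: "finite (ramsey_constraints N k s t q)"
  unfolding ramsey_constraints_def by (auto intro!: finite_imp_finite_nsets)

lemma sum_ramsey_constraints_le:
  assumes "1 \<le> q"
  shows "(\<Sum>(Q, R)\<in>ramsey_constraints N k s t q. (real (card R) / real (card {..<q})) ^ card Q)
    \<le> real (N choose k) * (1 - 1 / real q) ^ (k choose 2) + real (N choose s) / real q ^ (s choose 2)
      + real N * real (N choose t) / real q ^ t"
    (is "sum ?p _ \<le> _")
proof -
  have p_nonneg: "0 \<le> ?p QR" for QR
    by (auto split: prod.splits)
  have sum_Un_le: "sum ?p (X \<union> Y) \<le> sum ?p X + sum ?p Y" for X Y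
  proof (cases "finite X \<and> finite Y")
    case True
    then show ?thesis
      using sum_Un[of X Y ?p] sum_nonneg[of "X \<inter> Y" ?p, OF p_nonneg] by linarith
  qed (auto intro!: add_nonneg_nonneg sum_nonneg p_nonneg)
  have card_nsets_member: "card A = m" if "A \<in> [X]\<^bsup>m\<^esup>" for A X and m :: nat
    using that by (simp add: nsets_def)
  have "sum ?p ((\<lambda>A. ([A]\<^bsup>2\<^esup>, {1..<q})) ` [{..<N}]\<^bsup>k\<^esup>) \<le> real (N choose k) * (1 - 1 / real q) ^ (k choose 2)"
    using assms
    by (intro sum_image_le_card_mult[where w = "(1 - 1 / real q) ^ (k choose 2)", THEN order_trans])
      (auto simp: finite_imp_finite_nsets card_nsets_member diff_divide_distrib of_nat_diff)
  moreover have "sum ?p ((\<lambda>A. ([A]\<^bsup>2\<^esup>, {0})) ` [{..<N}]\<^bsup>s\<^esup>) \<le> real (N choose s) / real q ^ (s choose 2)"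
    by (intro sum_image_le_card_mult[where w = "1 / real q ^ (s choose 2)", THEN order_trans])
      (auto simp: finite_imp_finite_nsets card_nsets_member power_one_over)
  moreover have "sum ?p ((\<lambda>(v, T). ((\<lambda>w. {v, w}) ` T, {0})) ` (SIGMA v:{..<N}. [{..<N} - {v}]\<^bsup>t\<^esup>))
      \<le> real N * real (N choose t) / real q ^ t"
  proof (rule sum_image_le_card_mult[where w = "1 / real q ^ t", THEN order_trans])
    show "?p (case vT of (v, T) \<Rightarrow> ((\<lambda>w. {v, w}) ` T, {0})) = 1 / real q ^ t"
      if "vT \<in> (SIGMA v:{..<N}. [{..<N} - {v}]\<^bsup>t\<^esup>)" for vT
    proof -
      obtain v T where vT: "vT = (v, T)"
        by fastforce
      with that have "v \<notin> T" "card T = t"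
        by (auto simp: nsets_def)
      have "inj_on (\<lambda>w. {v, w}) T"
        by (auto simp: inj_on_def doubleton_eq_iff)
      then show ?thesis
        using vT \<open>card T = t\<close> by (simp add: card_image power_one_over)
    qed
    have "card (SIGMA v:{..<N}. [{..<N} - {v}]\<^bsup>t\<^esup>) = N * (N - 1 choose t)"
      by (simp add: finite_imp_finite_nsets)
    then show "real (card (SIGMA v:{..<N}. [{..<N} - {v}]\<^bsup>t\<^esup>)) * (1 / real q ^ t) \<le> real N * real (N choose t) / real q ^ t"
      by (simp add: divide_right_mono mult_left_mono binomial_right_mono)
  qed (auto simp: finite_imp_finite_nsets)
  ultimately show ?thesis
    unfolding ramsey_constraints_def by (smt (verit) sum_Un_le)
qed

lemma sparse_ramsey_graph_colour_class:
  assumes c: "c \<in> PiE ([{..<N}]\<^bsup>2\<^esup>) (\<lambda>_. {..<q})"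
    and avoids: "\<forall>(Q, R)\<in>ramsey_constraints N k s t q. \<exists>e\<in>Q. c e \<notin> R"
  shows "sparse_ramsey_graph N k s t {e \<in> [{..<N}]\<^bsup>2\<^esup>. c e = 0}"
    (is "sparse_ramsey_graph N k s t ?G")
proof -
  have avoid: "\<exists>e\<in>Q. c e \<notin> R" if "(Q, R) \<in> ramsey_constraints N k s t q" for Q R
    using avoids that by blast
  have pairs_in: "[A]\<^bsup>2\<^esup> \<subseteq> [{..<N}]\<^bsup>2\<^esup>" if "A \<in> [{..<N}]\<^bsup>m\<^esup>" for A m
    using that by (intro nsets_mono) (simp add: nsets_def)
  have "[A]\<^bsup>2\<^esup> \<inter> ?G \<noteq> {}" if A: "A \<in> [{..<N}]\<^bsup>k\<^esup>" for A
  proof -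
    have "([A]\<^bsup>2\<^esup>, {1..<q}) \<in> ramsey_constraints N k s t q"
      using A unfolding ramsey_constraints_def by blast
    then obtain e where "e \<in> [A]\<^bsup>2\<^esup>" "c e \<notin> {1..<q}"
      using avoid by blast
    moreover have "c e < q"
      using c pairs_in[OF A] \<open>e \<in> [A]\<^bsup>2\<^esup>\<close> by (auto simp: PiE_iff)
    ultimately show ?thesis
      using pairs_in[OF A] by auto
  qed
  moreover have "\<not> [A]\<^bsup>2\<^esup> \<subseteq> ?G" if A: "A \<in> [{..<N}]\<^bsup>s\<^esup>" for A
  proof -
    have "([A]\<^bsup>2\<^esup>, {0}) \<in> ramsey_constraints N k s t q"
      using A unfolding ramsey_constraints_def by blast
    then show ?thesis
      using avoid by fastforce
  qed
  moreover have "card {w. {v, w} \<in> ?G} < t" if v: "v < N" for v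
  proof (rule ccontr)
    assume "\<not> ?thesis"
    then obtain T where T: "T \<subseteq> {w. {v, w} \<in> ?G}" "card T = t" "finite T"
      by (meson not_less obtain_subset_with_card_n)
    then have "T \<in> [{..<N} - {v}]\<^bsup>t\<^esup>"
      by (auto simp: nsets_def card_insert_if split: if_splits)
    with v have "((\<lambda>w. {v, w}) ` T, {0}) \<in> ramsey_constraints N k s t q"
      unfolding ramsey_constraints_def by (intro UnI2 image_eqI[where x = "(v, T)"]) auto
    then obtain w where "w \<in> T" "c {v, w} \<noteq> 0"
      using avoid by fastforce
    then show False
      using T by auto
  qed
  ultimately show ?thesis
    unfolding sparse_ramsey_graph_def by blast
qed

lemma ex_sparse_ramsey_graph:
  assumes "1 \<le> q"
    and "real (N choose k) * (1 - 1 / real q) ^ (k choose 2) + real (N choose s) / real q ^ (s choose 2)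
      + real N * real (N choose t) / real q ^ t < 1"
  shows "\<exists>G. sparse_ramsey_graph N k s t G"
proof -
  have "\<exists>c\<in>PiE ([{..<N}]\<^bsup>2\<^esup>) (\<lambda>_. {..<q}). \<forall>(Q, R)\<in>ramsey_constraints N k s t q. \<exists>e\<in>Q. c e \<notin> R"
  proof (rule ex_PiE_avoiding_constraints)
    show "Q \<subseteq> [{..<N}]\<^bsup>2\<^esup> \<and> R \<subseteq> {..<q}" if "(Q, R) \<in> ramsey_constraints N k s t q" for Q R
      using that assms(1) unfolding ramsey_constraints_def
      by (auto simp: nsets_def card_insert_if split: if_splits)
    show "(\<Sum>(Q, R)\<in>ramsey_constraints N k s t q. (real (card R) / real (card {..<q})) ^ card Q) < 1"
      using sum_ramsey_constraints_le[OF assms(1), of N k s t] assms(2) by linarith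
    have "0 \<in> {..<q}"
      using assms(1) by simp
    then show "{..<q} \<noteq> {}"
      by blast
  qed (auto simp: finite_imp_finite_nsets finite_ramsey_constraints)
  then show ?thesis
    using sparse_ramsey_graph_colour_class by blast
qed

section \<open>Hedgehogs\<close>

(* A triple (i, j, l) is the l-th spike on the body pair {i, j}, coded injectively above the
   body {..<K}. *)
definition spike :: "nat \<Rightarrow> nat \<times> nat \<times> nat \<Rightarrow> nat" where
  "spike K = (\<lambda>(i, j, l). K + prod_encode (i, prod_encode (j, l)))"

definition hedgehog_vertices :: "nat \<Rightarrow> (nat \<times> nat \<times> nat) set \<Rightarrow> nat set" where
  "hedgehog_vertices K X = {..<K} \<union> spike K ` X"

definition hedgehog_edges :: "nat \<Rightarrow> (nat \<times> nat \<times> nat) set \<Rightarrow> nat set set" where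
  "hedgehog_edges K X = (\<lambda>(i, j, l). {i, j, spike K (i, j, l)}) ` X"

lemma inj_spike: "inj (spike K)"
  by (auto simp: inj_def spike_def prod_encode_eq)

lemma spike_ge: "K \<le> spike K x"
  by (simp add: spike_def split: prod.splits)

lemma card_hedgehog_vertices:
  assumes "finite X"
  shows "card (hedgehog_vertices K X) = K + card X"
proof -
  have "{..<K} \<inter> spike K ` X = {}"
    using spike_ge not_le by blast
  then show ?thesis
    using assms card_image[OF inj_on_subset[OF inj_spike subset_UNIV]]
    unfolding hedgehog_vertices_def by (simp add: card_Un_disjoint)
qed

lemma hedgehog_edgeE:
  assumes "e \<in> hedgehog_edges K X"
  obtains i j l where "(i, j, l) \<in> X" "e = {i, j, spike K (i, j, l)}"
  using assms unfolding hedgehog_edges_def by auto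

lemma hedgehog_edge_parts:
  assumes "(i, j, l) \<in> X" "i < j" "j < K"
  shows "{i, j, spike K (i, j, l)} \<inter> spike K ` X = {spike K (i, j, l)}"
    and "{i, j, spike K (i, j, l)} \<inter> {..<K} = {i, j}"
proof -
  have "i \<notin> spike K ` X" "j \<notin> spike K ` X"
    using assms(2,3) spike_ge[of K] not_le by (blast dest: less_trans)+
  moreover have "spike K (i, j, l) \<in> spike K ` X" "spike K (i, j, l) \<notin> {..<K}"
    using assms(1) spike_ge[of K "(i, j, l)"] by auto
  ultimately show "{i, j, spike K (i, j, l)} \<inter> spike K ` X = {spike K (i, j, l)}"
      "{i, j, spike K (i, j, l)} \<inter> {..<K} = {i, j}"
    using assms(2,3) by auto
qed

lemma ex1_hedgehog_edge_spike:
  assumes body: "\<And>i j l. (i, j, l) \<in> X \<Longrightarrow> i < j \<and> j < K" and "(i, j, l) \<in> X"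
  shows "\<exists>!e. e \<in> hedgehog_edges K X \<and> spike K (i, j, l) \<in> e"
proof (rule ex1I)
  show "{i, j, spike K (i, j, l)} \<in> hedgehog_edges K X \<and> spike K (i, j, l) \<in> {i, j, spike K (i, j, l)}"
    using assms(2) unfolding hedgehog_edges_def by force
  show "e = {i, j, spike K (i, j, l)}" if e: "e \<in> hedgehog_edges K X \<and> spike K (i, j, l) \<in> e" for e
  proof -
    obtain i' j' l' where ijl': "(i', j', l') \<in> X" "e = {i', j', spike K (i', j', l')}"
      using e by (auto elim: hedgehog_edgeE)
    then have "spike K (i, j, l) \<in> {spike K (i', j', l')}"
      using e assms(2) hedgehog_edge_parts(1)[OF ijl'(1)] body[OF ijl'(1)] by blast
    then show ?thesis
      using ijl'(2) inj_spike by (simp add: inj_eq)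
  qed
qed

lemma gen_hedgehog_hedgehog:
  assumes "finite X" and body: "\<And>i j l. (i, j, l) \<in> X \<Longrightarrow> i < j \<and> j < K"
  shows "gen_hedgehog (hedgehog_vertices K X) (hedgehog_edges K X)"
proof -
  define S where "S = spike K ` X"
  have edges: "e \<subseteq> {..<K} \<union> S \<and> card e = 3 \<and> card (e \<inter> S) = 1 \<and> card (e \<inter> {..<K}) = 2"
    if e: "e \<in> hedgehog_edges K X" for e
  proof -
    obtain i j l where ijl: "(i, j, l) \<in> X" "e = {i, j, spike K (i, j, l)}"
      using e by (rule hedgehog_edgeE)
    have "i < j" "j < K"
      using body[OF ijl(1)] by auto
    then have "e \<inter> S = {spike K (i, j, l)}" "e \<inter> {..<K} = {i, j}"
      using hedgehog_edge_parts[OF ijl(1)] ijl(2) unfolding S_def by simp_all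
    moreover have "card e = 3"
      using \<open>i < j\<close> \<open>j < K\<close> spike_ge[of K "(i, j, l)"] ijl(2) by simp
    ultimately show ?thesis
      using \<open>i < j\<close> \<open>j < K\<close> ijl(2) by auto
  qed
  have spikes: "\<exists>!e. e \<in> hedgehog_edges K X \<and> z \<in> e" if z: "z \<in> S" for z
  proof -
    obtain i j l where "(i, j, l) \<in> X" "z = spike K (i, j, l)"
      using z unfolding S_def by auto
    with body show ?thesis
      by (simp add: ex1_hedgehog_edge_spike)
  qed
  have "finite S" "{..<K} \<inter> S = {}"
    using assms(1) spike_ge not_le unfolding S_def by blast+
  then have "three_graph ({..<K} \<union> S) (hedgehog_edges K X)"
    using edges unfolding three_graph_def by blast
  moreover have "\<exists>B S'. B \<inter> S' = {} \<and> {..<K} \<union> S = B \<union> S' \<and>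
      (\<forall>e\<in>hedgehog_edges K X. card (e \<inter> S') = 1 \<and> card (e \<inter> B) = 2) \<and>
      (\<forall>z\<in>S'. \<exists>!e. e \<in> hedgehog_edges K X \<and> z \<in> e)"
    by (rule exI[of _ "{..<K}"], rule exI[of _ S]) (use \<open>{..<K} \<inter> S = {}\<close> edges spikes in auto)
  ultimately show ?thesis
    unfolding gen_hedgehog_def hedgehog_vertices_def S_def[symmetric] by blast
qed

definition hstar_spikes :: "nat \<Rightarrow> nat \<Rightarrow> nat \<Rightarrow> (nat \<times> nat \<times> nat) set" where
  "hstar_spikes k s M = {(i, j, l). i < j \<and> j < k \<and> (l = 0 \<or> j < s \<and> l < M)}"

lemma hstar_spikes_subset: "hstar_spikes k s M \<subseteq> {..<k} \<times> {..<k} \<times> {0} \<union> {..<s} \<times> {..<s} \<times> {..<M}"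
  unfolding hstar_spikes_def by auto

lemma finite_hstar_spikes: "finite (hstar_spikes k s M)"
  using hstar_spikes_subset by (rule finite_subset) auto

lemma card_hstar_spikes_le: "card (hstar_spikes k s M) \<le> k * k + s * s * M"
proof -
  have "card (hstar_spikes k s M) \<le> card ({..<k} \<times> {..<k} \<times> {0::nat} \<union> {..<s} \<times> {..<s} \<times> {..<M})"
    using hstar_spikes_subset by (rule card_mono[rotated]) auto
  also have "\<dots> \<le> k * k + s * s * M"
    using card_Un_le[of "{..<k} \<times> {..<k} \<times> {0::nat}" "{..<s} \<times> {..<s} \<times> {..<M}"]
    by (simp add: card_cartesian_product)
  finally show ?thesis .
qed

section \<open>Ramsey numbers\<close>

lemma has_copy_mono: "has_copy N col b V E \<Longrightarrow> N \<le> N' \<Longrightarrow> has_copy N' col b V E"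
  unfolding has_copy_def by fastforce

lemma ex_arrows:
  assumes "three_graph V E"
  shows "\<exists>N. arrows N V E V E"
proof -
  have "finite V"
    using assms unfolding three_graph_def by blast
  obtain N :: nat where N: "partn_lst {..<N} [card V, card V] 3"
    using ramsey_full[of "[card V, card V]" 3] by blast
  have "has_copy N col True V E \<or> has_copy N col False V E" for col :: "nat set \<Rightarrow> bool"
  proof -
    define g where "g T = (if col T then 0 else 1 :: nat)" for T
    have "g \<in> [{..<N}]\<^bsup>3\<^esup> \<rightarrow> {..<2}"
      unfolding g_def by auto
    then obtain i where i: "i < 2" "monochromatic {..<N} ([card V, card V] ! i) 3 g i"
      using N unfolding partn_lst_def by (auto simp: numeral_2_eq_2)
    moreover have "[card V, card V] ! i = card V"
      using i(1) by (cases i) auto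
    ultimately obtain H where H: "H \<in> [{..<N}]\<^bsup>card V\<^esup>" "g ` [H]\<^bsup>3\<^esup> \<subseteq> {i}"
      unfolding monochromatic_def by auto
    then have "finite H" "card H = card V"
      by (auto simp: nsets_def)
    then obtain h where h: "bij_betw h V H"
      using \<open>finite V\<close> finite_same_card_bij by metis
    have "col (h ` e) = (i = 0)" if "e \<in> E" for e
    proof -
      have "e \<subseteq> V" "card e = 3"
        using assms that unfolding three_graph_def by auto
      then have "h ` e \<in> [H]\<^bsup>3\<^esup>"
        using h \<open>finite V\<close> by (auto simp: nsets_def bij_betw_def card_image inj_on_subset finite_subset)
      then show ?thesis
        using H(2) i(1) unfolding g_def by (auto split: if_splits)
    qed
    moreover have "inj_on h V" "h ` V \<subseteq> {..<N}"
      using h H(1) by (auto simp: bij_betw_def nsets_def)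
    ultimately have "has_copy N col (i = 0) V E"
      unfolding has_copy_def by blast
    then show ?thesis
      by (cases "i = 0") auto
  qed
  then show ?thesis
    unfolding arrows_def by blast
qed

lemma less_ramsey_if_not_arrows:
  assumes "three_graph V E" "\<not> arrows N V E V E"
  shows "N < ramsey V E"
proof -
  have "arrows (ramsey V E) V E V E"
    unfolding ramsey_def ramsey2_def using ex_arrows[OF assms(1)] by (rule LeastI_ex)
  then show ?thesis
    using assms(2) has_copy_mono unfolding arrows_def by (meson not_less)
qed

lemma nsets_2_image_ordered:
  fixes f :: "'a::linorder \<Rightarrow> 'b"
  assumes "e \<in> [f ` A]\<^bsup>2\<^esup>"
  obtains i j where "i \<in> A" "j \<in> A" "i < j" "e = {f i, f j}"
proof -
  obtain i j where "i \<in> A" "j \<in> A" "i \<noteq> j" "e = {f i, f j}"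
    using assms by (auto simp: nsets_2_eq)
  then show ?thesis
    using that by (metis insert_commute linorder_neqE)
qed

lemma nsets_2_triple_meets:
  "[{a, b, c}]\<^bsup>2\<^esup> \<inter> G \<noteq> {} \<Longrightarrow> {a, b} \<notin> G \<Longrightarrow> {a, c} \<in> G \<or> {b, c} \<in> G"
  by (auto simp: nsets_2_eq insert_commute)

lemma spike_adjacent_in_red_copy:
  assumes red: "\<forall>e\<in>hedgehog_edges K X. [f ` e]\<^bsup>2\<^esup> \<inter> G \<noteq> {}"
    and "{f i, f j} \<notin> G" "(i, j, l) \<in> X"
  shows "{f i, f (spike K (i, j, l))} \<in> G \<or> {f j, f (spike K (i, j, l))} \<in> G"
proof -
  have "{i, j, spike K (i, j, l)} \<in> hedgehog_edges K X"
    using assms(3) unfolding hedgehog_edges_def by force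
  then have "[f ` {i, j, spike K (i, j, l)}]\<^bsup>2\<^esup> \<inter> G \<noteq> {}"
    using red by blast
  then have "[{f i, f j, f (spike K (i, j, l))}]\<^bsup>2\<^esup> \<inter> G \<noteq> {}"
    unfolding image_insert image_empty .
  from nsets_2_triple_meets[OF this assms(2)] show ?thesis .
qed

lemma sparse_ramsey_graph_nbhd:
  assumes "sparse_ramsey_graph N k s t G" "v < N"
  shows "finite {w. {v, w} \<in> G}" "card {w. {v, w} \<in> G} < t"
proof -
  have "{w. {v, w} \<in> G} \<subseteq> {..<N}"
    using assms(1) unfolding sparse_ramsey_graph_def nsets_def by auto
  then show "finite {w. {v, w} \<in> G}"
    by (rule finite_subset) simp
  show "card {w. {v, w} \<in> G} < t"
    using assms unfolding sparse_ramsey_graph_def by blast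
qed

lemma image_in_nsets:
  assumes "inj_on f V" "f ` V \<subseteq> {..<N}" "A \<subseteq> V" "finite A"
  shows "f ` A \<in> [{..<N}]\<^bsup>card A\<^esup>"
  using assms by (auto simp: nsets_def card_image inj_on_subset)

lemma no_blue_hstar:
  assumes G: "sparse_ramsey_graph N k s t G" and "k \<le> K"
  shows "\<not> has_copy N (\<lambda>T. [T]\<^bsup>2\<^esup> \<inter> G = {}) True
           (hedgehog_vertices K (hstar_spikes k s M)) (hedgehog_edges K (hstar_spikes k s M))"
proof
  assume "has_copy N (\<lambda>T. [T]\<^bsup>2\<^esup> \<inter> G = {}) True
    (hedgehog_vertices K (hstar_spikes k s M)) (hedgehog_edges K (hstar_spikes k s M))"
  then obtain f where f: "inj_on f (hedgehog_vertices K (hstar_spikes k s M))"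
      "f ` hedgehog_vertices K (hstar_spikes k s M) \<subseteq> {..<N}"
      "\<forall>e\<in>hedgehog_edges K (hstar_spikes k s M). [f ` e]\<^bsup>2\<^esup> \<inter> G = {}"
    unfolding has_copy_def by auto
  have "{..<k} \<subseteq> hedgehog_vertices K (hstar_spikes k s M)"
    using \<open>k \<le> K\<close> unfolding hedgehog_vertices_def by auto
  then have "f ` {..<k} \<in> [{..<N}]\<^bsup>k\<^esup>"
    using image_in_nsets[OF f(1,2), of "{..<k}"] by simp
  then obtain e where "e \<in> [f ` {..<k}]\<^bsup>2\<^esup>" "e \<in> G"
    using G unfolding sparse_ramsey_graph_def by blast
  then obtain i j where ij: "i < j" "j < k" "{f i, f j} \<in> G"
    by (elim nsets_2_image_ordered) auto
  then have "{i, j, spike K (i, j, 0)} \<in> hedgehog_edges K (hstar_spikes k s M)"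
    unfolding hedgehog_edges_def hstar_spikes_def by force
  moreover have "{f i, f j} \<in> [f ` {i, j, spike K (i, j, 0)}]\<^bsup>2\<^esup>"
    using ij(3) G unfolding sparse_ramsey_graph_def nsets_def by auto
  ultimately show False
    using f(3) ij(3) by blast
qed

lemma no_red_hstar:
  assumes G: "sparse_ramsey_graph N k s t G" and "s \<le> k" "k \<le> K" "2 * t \<le> M"
  shows "\<not> has_copy N (\<lambda>T. [T]\<^bsup>2\<^esup> \<inter> G = {}) False
           (hedgehog_vertices K (hstar_spikes k s M)) (hedgehog_edges K (hstar_spikes k s M))"
proof
  let ?V = "hedgehog_vertices K (hstar_spikes k s M)"
  assume "has_copy N (\<lambda>T. [T]\<^bsup>2\<^esup> \<inter> G = {}) False ?V (hedgehog_edges K (hstar_spikes k s M))"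
  then obtain f where f: "inj_on f ?V" "f ` ?V \<subseteq> {..<N}"
      "\<forall>e\<in>hedgehog_edges K (hstar_spikes k s M). [f ` e]\<^bsup>2\<^esup> \<inter> G \<noteq> {}"
    unfolding has_copy_def by auto
  have "{..<s} \<subseteq> ?V"
    using assms(2,3) unfolding hedgehog_vertices_def by auto
  then have "f ` {..<s} \<in> [{..<N}]\<^bsup>s\<^esup>"
    using image_in_nsets[OF f(1,2), of "{..<s}"] by simp
  then obtain e where "e \<in> [f ` {..<s}]\<^bsup>2\<^esup>" "e \<notin> G"
    using G unfolding sparse_ramsey_graph_def by blast
  then obtain i j where ij: "i < j" "j < s" "{f i, f j} \<notin> G"
    by (elim nsets_2_image_ordered) auto
  define nbhd where "nbhd v = {w. {v, w} \<in> G}" for v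
  define w where "w l = f (spike K (i, j, l))" for l
  have spike_in: "(i, j, l) \<in> hstar_spikes k s M" if "l < M" for l
    using ij assms(2) that unfolding hstar_spikes_def by auto
  have spikes_in_nbhd: "w ` {..<M} \<subseteq> nbhd (f i) \<union> nbhd (f j)"
    using spike_adjacent_in_red_copy[OF f(3) ij(3) spike_in] unfolding w_def nbhd_def by auto
  have "inj_on w {..<M}"
  proof (rule inj_onI)
    fix l l' assume "l \<in> {..<M}" "l' \<in> {..<M}" "w l = w l'"
    then have "spike K (i, j, l) = spike K (i, j, l')"
      using f(1) spike_in unfolding w_def hedgehog_vertices_def by (auto dest: inj_onD)
    then show "l = l'"
      using inj_spike by (auto dest: injD)
  qed
  have "i \<in> ?V" "j \<in> ?V"
    using \<open>{..<s} \<subseteq> ?V\<close> ij(1,2) by auto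
  then have "f i < N" "f j < N"
    using f(2) by auto
  note nbhd = sparse_ramsey_graph_nbhd[OF G, folded nbhd_def]
  have "M = card (w ` {..<M})"
    using \<open>inj_on w {..<M}\<close> by (simp add: card_image)
  also have "\<dots> \<le> card (nbhd (f i) \<union> nbhd (f j))"
    using nbhd(1)[OF \<open>f i < N\<close>] nbhd(1)[OF \<open>f j < N\<close>] spikes_in_nbhd
    by (intro card_mono) auto
  also have "\<dots> \<le> card (nbhd (f i)) + card (nbhd (f j))"
    by (rule card_Un_le)
  also have "\<dots> < 2 * t"
    using nbhd(2)[OF \<open>f i < N\<close>] nbhd(2)[OF \<open>f j < N\<close>] by linarith
  finally show False
    using assms(4) by linarith
qed

lemma ex_hedgehog_ramsey_gt:
  assumes G: "sparse_ramsey_graph N k s t G" and "s \<le> k" "k + k * k + s * s * (2 * t) \<le> n"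
  shows "\<exists>(V::nat set) E. gen_hedgehog V E \<and> card V = n \<and> N < ramsey V E"
proof -
  define X where "X = hstar_spikes k s (2 * t)"
  define K where "K = n - card X"
  have "card X \<le> k * k + s * s * (2 * t)"
    unfolding X_def by (rule card_hstar_spikes_le)
  then have "k \<le> K" "card (hedgehog_vertices K X) = n"
    using assms(3) finite_hstar_spikes card_hedgehog_vertices unfolding K_def X_def by auto
  moreover have hedgehog: "gen_hedgehog (hedgehog_vertices K X) (hedgehog_edges K X)"
    using finite_hstar_spikes \<open>k \<le> K\<close> unfolding X_def
    by (intro gen_hedgehog_hedgehog) (auto simp: hstar_spikes_def)
  moreover have "N < ramsey (hedgehog_vertices K X) (hedgehog_edges K X)"
  proof (rule less_ramsey_if_not_arrows)
    show "three_graph (hedgehog_vertices K X) (hedgehog_edges K X)"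
      using hedgehog unfolding gen_hedgehog_def by blast
    show "\<not> arrows N (hedgehog_vertices K X) (hedgehog_edges K X) (hedgehog_vertices K X) (hedgehog_edges K X)"
      using no_blue_hstar[OF G \<open>k \<le> K\<close>] no_red_hstar[OF G assms(2) \<open>k \<le> K\<close> order_refl]
      unfolding arrows_def X_def by blast
  qed
  ultimately show ?thesis
    by blast
qed

section \<open>Choice of parameters\<close>

lemma real_choose_two: "real (n choose 2) = real n * (real n - 1) / 2"
  by (induction n) (auto simp: numeral_2_eq_2 field_simps)

lemma power_div_fact_le_exp: "0 \<le> x \<Longrightarrow> x ^ n / fact n \<le> exp (x :: real)"
  using sum_le_suminf[OF summable_exp, of "{n}" x] by (simp add: exp_def divide_inverse mult.commute)

lemma choose_le_power: "n choose k \<le> n ^ k"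
  by (cases "k \<le> n") (auto simp: binomial_le_pow binomial_eq_0)

lemma choose_mult_power_le:
  assumes "1 \<le> q" "1 \<le> N" and qk: "4 * real q * ln (real N) \<le> real k - 1"
  shows "real (N choose k) * (1 - 1 / real q) ^ (k choose 2) \<le> 1 / real N ^ k"
proof -
  have N_pow: "real N ^ k = exp (real k * ln (real N))"
    using assms(2) by (simp add: exp_of_nat_mult)
  have "2 * real k * ln (real N) \<le> real (k choose 2) / real q"
    using mult_left_mono[OF qk, of "real k"] assms(1)
    by (simp add: real_choose_two field_simps)
  have "(1 - 1 / real q) ^ (k choose 2) \<le> exp (- 2 * real k * ln (real N))"
  proof -
    have "(1 - 1 / real q) ^ (k choose 2) \<le> exp (- 1 / real q) ^ (k choose 2)"
      using assms(1) exp_ge_add_one_self[of "- 1 / real q"] by (intro power_mono) auto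
    also have "\<dots> = exp (- real (k choose 2) / real q)"
      by (simp flip: exp_of_nat_mult)
    also have "\<dots> \<le> exp (- 2 * real k * ln (real N))"
      using \<open>2 * real k * ln (real N) \<le> _\<close> by (simp add: minus_divide_left[symmetric])
    finally show ?thesis .
  qed
  moreover have "real (N choose k) \<le> exp (real k * ln (real N))"
    using choose_le_power[of N k] N_pow by (metis of_nat_le_iff of_nat_power)
  ultimately have "real (N choose k) * (1 - 1 / real q) ^ (k choose 2)
      \<le> exp (real k * ln (real N)) * exp (- 2 * real k * ln (real N))"
    using assms(1) by (intro mult_mono) auto
  also have "\<dots> = 1 / real N ^ k"
    by (simp add: N_pow exp_minus field_simps flip: exp_add)
  finally show ?thesis .
qed

lemma choose_nine_div_power_le:
  assumes "3 * real N \<le> real q ^ 4"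
  shows "real (N choose 9) / real q ^ (9 choose 2) \<le> 1 / 4"
proof -
  have "real (N choose 9) \<le> real N ^ 9"
    using choose_le_power[of N 9] by (metis of_nat_le_iff of_nat_power)
  moreover have "(3 * real N) ^ 9 \<le> (real q ^ 4) ^ 9"
    using assms by (intro power_mono) auto
  then have "19683 * real N ^ 9 \<le> real q ^ 36"
    by (simp only: power_mult_distrib flip: power_mult) simp
  ultimately have "4 * real (N choose 9) \<le> real q ^ 36"
    using zero_le_power[of "real N" 9] by linarith
  moreover have "(9 :: nat) choose 2 = 36"
    by (simp add: choose_two)
  ultimately show ?thesis
    by (cases "q = 0") (auto simp: divide_le_eq)
qed

lemma mult_choose_div_power_le:
  assumes "0 < q" "8 * real N \<le> real t * real q" "4 * real N \<le> 2 ^ t"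
  shows "real N * real (N choose t) / real q ^ t \<le> 1 / 4"
proof -
  have "(8 :: real) ^ t = 4 ^ t * 2 ^ t"
    by (simp flip: power_mult_distrib)
  then have "4 ^ t * fact t * (2 ^ t * real (N choose t)) = 8 ^ t * (real (N choose t) * fact t)"
    by (simp add: mult_ac)
  also have "\<dots> \<le> (8 * real N) ^ t"
  proof -
    have "real (N choose t) * fact t \<le> real N ^ t"
      by (metis binomial_fact_pow of_nat_fact of_nat_le_iff of_nat_mult of_nat_power)
    then show ?thesis
      unfolding power_mult_distrib by (rule mult_left_mono) simp
  qed
  also have "\<dots> \<le> fact t * exp (real t) * real q ^ t"
  proof -
    have "(8 * real N) ^ t \<le> real t ^ t * real q ^ t"
      using power_mono[OF assms(2), of t] by (simp add: power_mult_distrib)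
    also have "\<dots> \<le> fact t * exp (real t) * real q ^ t"
    proof (rule mult_right_mono)
      show "real t ^ t \<le> fact t * exp (real t)"
        using power_div_fact_le_exp[of "real t" t] by (simp add: pos_divide_le_eq mult.commute)
    qed simp
    finally show ?thesis .
  qed
  also have "\<dots> \<le> 4 ^ t * fact t * real q ^ t"
  proof -
    have "exp (real t) = exp 1 ^ t"
      by (simp flip: exp_of_nat_mult)
    also have "\<dots> \<le> 4 ^ t"
      using exp_le by (intro power_mono) auto
    finally have "exp (real t) * (fact t * real q ^ t) \<le> 4 ^ t * (fact t * real q ^ t)"
      by (rule mult_right_mono) simp
    then show ?thesis
      by (simp add: mult_ac)
  qed
  finally have "2 ^ t * real (N choose t) \<le> real q ^ t"
    by (simp add: mult_le_cancel_left_pos)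
  then have "real N * real (N choose t) / real q ^ t \<le> real N / 2 ^ t"
    using assms(1) by (simp add: field_simps mult_left_mono)
  also have "\<dots> \<le> 1 / 4"
    using assms(3) by (simp add: field_simps)
  finally show ?thesis .
qed

lemma ex_sparse_ramsey_graph_nine:
  assumes "1 \<le> q" "3 \<le> N" "4 * real q * ln (real N) \<le> real k - 1"
    "3 * real N \<le> real q ^ 4" "8 * real N \<le> real t * real q" "4 * real N \<le> 2 ^ t"
  shows "\<exists>G. sparse_ramsey_graph N k 9 t G"
proof (rule ex_sparse_ramsey_graph[OF assms(1)])
  have "0 < q" "0 < ln (real N)"
    using assms(1,2) by simp_all
  then have "2 \<le> k"
    using assms(3) mult_pos_pos[of "real q" "ln (real N)"] by linarith
  have "(3 :: real) ^ 2 \<le> real N ^ 2"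
    using assms(2) by (intro power_mono) auto
  also have "\<dots> \<le> real N ^ k"
    using \<open>2 \<le> k\<close> assms(2) by (intro power_increasing) auto
  finally have "9 \<le> real N ^ k"
    by simp
  have "real (N choose k) * (1 - 1 / real q) ^ (k choose 2) \<le> 1 / real N ^ k"
    using assms(2) by (intro choose_mult_power_le[OF assms(1) _ assms(3)]) simp
  also have "\<dots> \<le> 1 / 9"
    using \<open>9 \<le> real N ^ k\<close> assms(2) by (intro divide_left_mono) simp_all
  finally show "real (N choose k) * (1 - 1 / real q) ^ (k choose 2) + real (N choose 9) / real q ^ (9 choose 2)
      + real N * real (N choose t) / real q ^ t < 1"
    using choose_nine_div_power_le[OF assms(4)] mult_choose_div_power_le[OF \<open>0 < q\<close> assms(5,6)]
    by linarith
qed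

lemma real_nat_floor_bounds: "0 \<le> r \<Longrightarrow> r - 1 \<le> real (nat \<lfloor>r\<rfloor>) \<and> real (nat \<lfloor>r\<rfloor>) \<le> r"
  by linarith

lemma ex_sparse_ramsey_graph_floors:
  fixes kr qr tr Nr :: real
  assumes "10 \<le> kr" "2 \<le> qr" "2 \<le> tr" "4 \<le> Nr" "4 * qr * ln Nr \<le> kr - 2"
    "3 * Nr \<le> (qr - 1) ^ 4" "8 * Nr \<le> (tr - 1) * (qr - 1)" "4 * Nr \<le> 2 powr (tr - 1)"
  shows "\<exists>G. sparse_ramsey_graph (nat \<lfloor>Nr\<rfloor>) (nat \<lfloor>kr\<rfloor>) 9 (nat \<lfloor>tr\<rfloor>) G"
proof -
  define k q t N where "k = nat \<lfloor>kr\<rfloor>" and "q = nat \<lfloor>qr\<rfloor>"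
    and "t = nat \<lfloor>tr\<rfloor>" and "N = nat \<lfloor>Nr\<rfloor>"
  have bounds: "kr - 1 \<le> real k" "qr - 1 \<le> real q" "real q \<le> qr"
    "tr - 1 \<le> real t" "Nr - 1 \<le> real N" "real N \<le> Nr"
    using assms(1-4) real_nat_floor_bounds unfolding k_def q_def t_def N_def by (smt (verit))+
  have "1 \<le> q" "3 \<le> N"
    using bounds assms(2,4) by linarith+
  have "real q * ln (real N) \<le> qr * ln Nr"
    using bounds assms(2) \<open>3 \<le> N\<close> by (intro mult_mono) auto
  then have "4 * real q * ln (real N) \<le> real k - 1"
    using bounds assms(5) by linarith
  moreover have "3 * real N \<le> real q ^ 4"
    using bounds assms(2,6) power_mono[of "qr - 1" "real q" 4] by linarith
  moreover have "8 * real N \<le> real t * real q"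
    using bounds assms(2,3,7) mult_mono[of "tr - 1" "real t" "qr - 1" "real q"] by linarith
  moreover have "4 * real N \<le> 2 ^ t"
    using bounds assms(8) powr_mono[of "tr - 1" "real t" 2] by (simp add: powr_realpow)
  ultimately show ?thesis
    using ex_sparse_ramsey_graph_nine \<open>1 \<le> q\<close> \<open>3 \<le> N\<close> unfolding k_def t_def N_def by blast
qed

lemma eventually_sparse_ramsey_graph:
  "\<forall>\<^sub>F n in sequentially. \<exists>k t N G. 9 \<le> k \<and> k + k * k + 9 * 9 * (2 * t) \<le> n \<and>
     sparse_ramsey_graph N k 9 t G \<and> real n powr (3/2) / (256000 * ln (real n)) \<le> real N"
proof -
  have "\<forall>\<^sub>F x :: real in at_top.
      10 \<le> sqrt x / 2 \<and> 2 \<le> sqrt x / (20 * ln x) \<and> 2 \<le> x / 400 \<and> 4 \<le> x powr (3/2) / (128000 * ln x) \<and>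
      4 * (sqrt x / (20 * ln x)) * ln (x powr (3/2) / (128000 * ln x)) \<le> sqrt x / 2 - 2 \<and>
      3 * (x powr (3/2) / (128000 * ln x)) \<le> (sqrt x / (20 * ln x) - 1) ^ 4 \<and>
      8 * (x powr (3/2) / (128000 * ln x)) \<le> (x / 400 - 1) * (sqrt x / (20 * ln x) - 1) \<and>
      4 * (x powr (3/2) / (128000 * ln x)) \<le> 2 powr (x / 400 - 1) \<and>
      sqrt x / 2 + x / 4 + 162 * (x / 400) \<le> x \<and>
      x powr (3/2) / (256000 * ln x) \<le> x powr (3/2) / (128000 * ln x) - 1"
    (is "\<forall>\<^sub>F x in at_top. ?P x")
    by (intro eventually_conj; real_asymp)
  then have "\<forall>\<^sub>F n in sequentially. ?P (real n)"
    by (rule eventually_compose_filterlim[OF _ filterlim_real_sequentially])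
  then show ?thesis
  proof (rule eventually_mono)
    fix n :: nat
    assume P: "?P (real n)"
    define kr tr Nr where "kr = sqrt (real n) / 2" and "tr = real n / 400"
      and "Nr = real n powr (3/2) / (128000 * ln (real n))"
    define k t N where "k = nat \<lfloor>kr\<rfloor>" and "t = nat \<lfloor>tr\<rfloor>" and "N = nat \<lfloor>Nr\<rfloor>"
    have "10 \<le> kr" "2 \<le> tr" "4 \<le> Nr"
      "kr + real n / 4 + 162 * tr \<le> real n" "real n powr (3/2) / (256000 * ln (real n)) \<le> Nr - 1"
      using P unfolding kr_def tr_def Nr_def by blast+
    moreover obtain G where "sparse_ramsey_graph N k 9 t G"
      using P ex_sparse_ramsey_graph_floors[of kr "sqrt (real n) / (20 * ln (real n))" tr Nr]
      unfolding k_def t_def N_def kr_def tr_def Nr_def by blast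
    moreover have "kr - 1 \<le> real k" "real k \<le> kr" "real t \<le> tr" "Nr - 1 \<le> real N"
      using \<open>10 \<le> kr\<close> \<open>2 \<le> tr\<close> \<open>4 \<le> Nr\<close> real_nat_floor_bounds
      unfolding k_def t_def N_def by auto
    moreover have "real k * real k \<le> kr * kr"
      using \<open>real k \<le> kr\<close> by (intro mult_mono) auto
    moreover have "kr * kr = real n / 4"
      unfolding kr_def by simp
    ultimately have "9 \<le> k" "real (k + k * k + 9 * 9 * (2 * t)) \<le> real n"
      "sparse_ramsey_graph N k 9 t G" "real n powr (3/2) / (256000 * ln (real n)) \<le> real N"
      by auto
    then show "\<exists>k t N G. 9 \<le> k \<and> k + k * k + 9 * 9 * (2 * t) \<le> n \<and>
      sparse_ramsey_graph N k 9 t G \<and> real n powr (3/2) / (256000 * ln (real n)) \<le> real N"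
      by (intro exI conjI) (simp_all only: of_nat_le_iff)
  qed
qed

theorem theorem1p1:
  shows "\<exists>c::real. c > 0 \<and> (\<exists>n0::nat. \<forall>n\<ge>n0.
           \<exists>(V::nat set) E. gen_hedgehog V E \<and> card V = n \<and>
             real (ramsey V E) \<ge> c * real n powr (3/2) / ln (real n))"
proof -
  obtain n0 where n0: "\<And>n. n0 \<le> n \<Longrightarrow> \<exists>k t N G. 9 \<le> k \<and> k + k * k + 9 * 9 * (2 * t) \<le> n \<and>
      sparse_ramsey_graph N k 9 t G \<and> real n powr (3/2) / (256000 * ln (real n)) \<le> real N"
    using eventually_sparse_ramsey_graph unfolding eventually_sequentially by blast
  have "\<exists>(V::nat set) E. gen_hedgehog V E \<and> card V = n \<and>
      real (ramsey V E) \<ge> 1 / 256000 * real n powr (3/2) / ln (real n)" if n: "n0 \<le> n" for n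
  proof -
    obtain k t N G where "9 \<le> k" "k + k * k + 9 * 9 * (2 * t) \<le> n" "sparse_ramsey_graph N k 9 t G"
      and N: "real n powr (3/2) / (256000 * ln (real n)) \<le> real N"
      using n0[OF n] by blast
    then obtain V :: "nat set" and E where "gen_hedgehog V E" "card V = n" "N < ramsey V E"
      using ex_hedgehog_ramsey_gt[of N k 9 t G n] by auto
    then show ?thesis
      using N by (intro exI[of _ V] exI[of _ E]) auto
  qed
  then show ?thesis
    by (intro exI[of _ "1 / 256000"]) auto
qed

end
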